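(* Let $G$ be a directed multigraph, let $s$ and $t$ be two distinct vertices, let $S$ be the latest $(s,t)$-mincut, let $R$ be the set of vertices reachable from $s$ in the induced subgraph $G[S]$, and let $x$ be an exit point of $S$ with $x\neq t$. Then $\lambda(R\cup\{x\},t)>\mathit{out}(S)$.
   Context: For a vertex set $S$, $\mathit{out}(S)$ is the number of edges $(x,y)$ with $x\in S$, $y\notin S$ (outgoing edges of $S$); an exit point of $S$ is the head of an outgoing edge of $S$. For disjoint vertex sets $X,Y$, $\lambda(X,Y)$ is the minimum of $\mathit{out}(S)$ over vertex sets $S$ with $X\subseteq S$, $S\cap Y=\emptyset$ (single vertices are identified with singletons). An $(s,t)$-mincut is a set $S$ with $s\in S$, $t\notin S$, $\mathit{out}(S)=\lambda(s,t)$; the latest $(s,t)$-mincut is the inclusion-wise maximum $(s,t)$-mincut (which exists). *)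

theory Defs
  imports "Graph_Theory.Digraph" "Graph_Theory.Digraph_Component"
begin

(* Directed multigraph: a finite digraph in the sense of Graph_Theory (parallel arcs allowed).
   Vertex sets S are subsets of verts G. *)

definition out_deg_set :: "('a,'b) pre_digraph \<Rightarrow> 'a set \<Rightarrow> nat" where
  "out_deg_set G S = card {e \<in> arcs G. tail G e \<in> S \<and> head G e \<notin> S}"

definition is_exit_point :: "('a,'b) pre_digraph \<Rightarrow> 'a set \<Rightarrow> 'a \<Rightarrow> bool" where
  "is_exit_point G S x \<longleftrightarrow> (\<exists>e \<in> arcs G. tail G e \<in> S \<and> head G e \<notin> S \<and> head G e = x)"

definition lambda_conn :: "('a,'b) pre_digraph \<Rightarrow> 'a set \<Rightarrow> 'a set \<Rightarrow> nat" where
  "lambda_conn G X Y = Min {out_deg_set G S | S. X \<subseteq> S \<and> S \<subseteq> verts G \<and> S \<inter> Y = {}}"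

definition is_st_mincut :: "('a,'b) pre_digraph \<Rightarrow> 'a \<Rightarrow> 'a \<Rightarrow> 'a set \<Rightarrow> bool" where
  "is_st_mincut G s t S \<longleftrightarrow> S \<subseteq> verts G \<and> s \<in> S \<and> t \<notin> S
     \<and> out_deg_set G S = lambda_conn G {s} {t}"

definition is_latest_st_mincut :: "('a,'b) pre_digraph \<Rightarrow> 'a \<Rightarrow> 'a \<Rightarrow> 'a set \<Rightarrow> bool" where
  "is_latest_st_mincut G s t S \<longleftrightarrow> is_st_mincut G s t S
     \<and> (\<forall>S'. is_st_mincut G s t S' \<longrightarrow> S' \<subseteq> S)"

end

theory Submission
  imports Defs
begin

(* Choose an optimal cut T for lambda(R \<union> {x}, t). It also separates s from t, so
   out(T) \<ge> lambda(s,t) = out(S); equality would make T an (s,t)-mincut and hence, S being the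
   latest one, T \<subseteq> S, which is impossible since the exit point x lies in T but not in S. *)

lemma finite_cut_values:
  assumes "finite (verts G)"
  shows "finite {out_deg_set G S | S. X \<subseteq> S \<and> S \<subseteq> verts G \<and> S \<inter> Y = {}}"
proof -
  have "{out_deg_set G S | S. X \<subseteq> S \<and> S \<subseteq> verts G \<and> S \<inter> Y = {}}
      \<subseteq> out_deg_set G ` Pow (verts G)"
    by auto
  then show ?thesis
    using assms finite_subset by blast
qed

lemma lambda_conn_le_out_deg_set:
  assumes "finite (verts G)" "X \<subseteq> T" "T \<subseteq> verts G" "T \<inter> Y = {}"
  shows "lambda_conn G X Y \<le> out_deg_set G T"
  unfolding lambda_conn_def
  by (rule Min_le[OF finite_cut_values[OF assms(1)]]) (use assms in blast)

lemma lambda_conn_attained: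
  assumes "finite (verts G)" "X \<subseteq> verts G" "X \<inter> Y = {}"
  obtains T where "X \<subseteq> T" "T \<subseteq> verts G" "T \<inter> Y = {}"
    "out_deg_set G T = lambda_conn G X Y"
proof -
  have "lambda_conn G X Y \<in> {out_deg_set G S | S. X \<subseteq> S \<and> S \<subseteq> verts G \<and> S \<inter> Y = {}}"
    unfolding lambda_conn_def
    by (rule Min_in[OF finite_cut_values[OF assms(1)]]) (use assms in blast)
  then show ?thesis
    using that by auto
qed

lemma latest_st_mincut_lt_lambda_conn:
  assumes "finite (verts G)" and latest: "is_latest_st_mincut G s t S"
    and "s \<in> X" "X \<subseteq> verts G" "t \<notin> X" "\<not> X \<subseteq> S"
  shows "out_deg_set G S < lambda_conn G X {t}"
proof (rule ccontr)
  assume not_gt: "\<not> ?thesis"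
  obtain T where T: "X \<subseteq> T" "T \<subseteq> verts G" "T \<inter> {t} = {}"
      "out_deg_set G T = lambda_conn G X {t}"
    using lambda_conn_attained[of G X "{t}"] assms by auto
  have "lambda_conn G {s} {t} \<le> out_deg_set G T"
    by (rule lambda_conn_le_out_deg_set) (use assms(1) T \<open>s \<in> X\<close> in auto)
  moreover have "out_deg_set G S = lambda_conn G {s} {t}"
    using latest unfolding is_latest_st_mincut_def is_st_mincut_def by blast
  ultimately have "out_deg_set G T = lambda_conn G {s} {t}"
    using not_gt T(4) by linarith
  then have "is_st_mincut G s t T"
    using T \<open>s \<in> X\<close> unfolding is_st_mincut_def by blast
  then have "T \<subseteq> S"
    using latest unfolding is_latest_st_mincut_def by blast
  then show False
    using T(1) \<open>\<not> X \<subseteq> S\<close> by blast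
qed

lemma reachable_induce_subgraph_mem:
  assumes "u \<rightarrow>\<^sup>*\<^bsub>induce_subgraph G S\<^esub> v"
  shows "v \<in> S"
  using reachable_in_vertsE[OF assms] by simp

theorem mainTheorem6:
  fixes G :: "('a,'b) pre_digraph" and s t x :: 'a and S R :: "'a set"
  assumes "fin_digraph G"
    and "s \<in> verts G" and "t \<in> verts G" and "s \<noteq> t"
    and "is_latest_st_mincut G s t S"
    and "R = {v. s \<rightarrow>\<^sup>*\<^bsub>induce_subgraph G S\<^esub> v}"
    and "is_exit_point G S x" and "x \<noteq> t"
  shows "lambda_conn G (R \<union> {x}) {t} > out_deg_set G S"
proof (rule latest_st_mincut_lt_lambda_conn[OF _ assms(5)])
  interpret fin_digraph G by fact
  show "finite (verts G)"
    by simp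
  have S: "S \<subseteq> verts G" "s \<in> S" "t \<notin> S"
    using assms(5) unfolding is_latest_st_mincut_def is_st_mincut_def by auto
  have "R \<subseteq> S"
    unfolding assms(6) by (auto intro: reachable_induce_subgraph_mem)
  moreover obtain e where "e \<in> arcs G" "head G e \<notin> S" "head G e = x"
    using assms(7) unfolding is_exit_point_def by auto
  ultimately show "R \<union> {x} \<subseteq> verts G" "t \<notin> R \<union> {x}" "\<not> R \<union> {x} \<subseteq> S"
    using S assms(8) by auto
  show "s \<in> R \<union> {x}"
    using assms(6) S(2) by (simp add: reachable_def)
qed

end
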